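(* Let $(X,d)$ be a metric space, $\mu$ a non-atomic Borel measure on $X$, $m$ a Borel measure on $X$, $0<p<\infty$, and let $\Gamma^*\subset\Gamma^\mu$ be a family of paths closed under taking non-trivial subpaths such that any two points of $X$ are joined by a path in $\Gamma^*$. Let $F$ be a closed subset of $X$ and let $f:X\to\mathbb R$ be $ACC_p$ with $f=0$ $m$-almost everywhere on $F$. If $\rho$ is an upper gradient of $f$, then $\rho\chi_{X\setminus F}$ is a $p$-weak upper gradient of $f$.
   Context: A path is a continuous map $\gamma:[a,b]\to X$; a subpath is a restriction to a subinterval, trivial if that interval is a point; $\mathrm{Im}(\gamma)=\gamma([a,b])$. $\mu$ non-atomic: $\mu(\{x\})=0$ for all $x$. $\Gamma^\mu$ is the set of all non-trivial injective paths $\gamma$ with $0<\mu(\mathrm{Im}(\tilde\gamma))<\infty$ for every non-trivial subpath $\tilde\gamma$. For Borel $g\ge0$, $\int_\gamma g:=\int_{\mathrm{Im}(\gamma)}g\,d\mu$. For $\gamma:[a,b]\to X$ in $\Gamma^\mu$, $h(\gamma)=\mu(\mathrm{Im}(\gamma))$, $\nu_\gamma(x)=\mu(\gamma([a,x]))$ (a bijection onto $[0,h(\gamma)]$), $\gamma_h=\gamma\circ\nu_\gamma^{-1}$. For $\Gamma\subset\Gamma^*$, $\mathrm{Mod}_p(\Gamma)=\inf\int_Xg^p\,dm$ over Borel $g\ge0$ with $\int_\gamma g\ge1$ for all $\gamma\in\Gamma$; "$p$-almost every path" means all paths of $\Gamma^*$ outside a family of $p$-modulus zero. A Borel $\rho\ge0$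 is an upper gradient of $f$ if $|f(x)-f(y)|\le\int_\gamma\rho$ for every $\gamma\in\Gamma^*$ with endpoints $x,y$ (with $f(x),f(y)$ finite), and a $p$-weak upper gradient if this holds for $p$-almost every $\gamma\in\Gamma^*$. $f$ is $ACC_p$ if $f\circ\gamma_h$ is absolutely continuous for $p$-almost every $\gamma\in\Gamma^*$. *)

theory Defs
  imports "HOL-Analysis.Analysis"
begin

(* A path gamma : [a,b] -> X is represented by a triple (a, b, g) with a <= b and
   g continuous on {a..b}; values of g outside {a..b} are irrelevant. *)
type_synonym 'a cpath = "real \<times> real \<times> (real \<Rightarrow> 'a)"

definition pa :: "'a cpath \<Rightarrow> real" where "pa \<gamma> = fst \<gamma>"
definition pb :: "'a cpath \<Rightarrow> real" where "pb \<gamma> = fst (snd \<gamma>)"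
definition pf :: "'a cpath \<Rightarrow> real \<Rightarrow> 'a" where "pf \<gamma> = snd (snd \<gamma>)"

definition is_cpath :: "'a::topological_space cpath \<Rightarrow> bool" where
  "is_cpath \<gamma> \<longleftrightarrow> pa \<gamma> \<le> pb \<gamma> \<and> continuous_on {pa \<gamma>..pb \<gamma>} (pf \<gamma>)"

definition pIm :: "'a cpath \<Rightarrow> 'a set" where
  "pIm \<gamma> = pf \<gamma> ` {pa \<gamma>..pb \<gamma>}"

definition is_restriction :: "'a cpath \<Rightarrow> real \<Rightarrow> real \<Rightarrow> 'a cpath \<Rightarrow> bool" where
  "is_restriction \<gamma> c d \<delta> \<longleftrightarrow> pa \<delta> = c \<and> pb \<delta> = d \<and> (\<forall>t\<in>{c..d}. pf \<delta> t = pf \<gamma> t)"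

definition Gamma_mu :: "'a::topological_space measure \<Rightarrow> 'a cpath set" where
  "Gamma_mu \<mu> = {\<gamma>. is_cpath \<gamma> \<and> pa \<gamma> < pb \<gamma> \<and> inj_on (pf \<gamma>) {pa \<gamma>..pb \<gamma>} \<and>
      (\<forall>c d. pa \<gamma> \<le> c \<and> c < d \<and> d \<le> pb \<gamma> \<longrightarrow>
          0 < emeasure \<mu> (pf \<gamma> ` {c..d}) \<and> emeasure \<mu> (pf \<gamma> ` {c..d}) < \<infinity>)}"

definition line_int :: "'a measure \<Rightarrow> 'a cpath \<Rightarrow> ('a \<Rightarrow> ennreal) \<Rightarrow> ennreal" where
  "line_int \<mu> \<gamma> g = (\<integral>\<^sup>+ x \<in> pIm \<gamma>. g x \<partial>\<mu>)"

definition epowr :: "ennreal \<Rightarrow> real \<Rightarrow> ennreal" where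
  "epowr x p = (if x = top then top else ennreal (enn2real x powr p))"

definition Modp :: "real \<Rightarrow> 'a::topological_space measure \<Rightarrow> 'a measure \<Rightarrow> 'a cpath set \<Rightarrow> ennreal" where
  "Modp p m \<mu> \<Gamma> = (INF g \<in> {g. g \<in> borel_measurable borel \<and> (\<forall>\<gamma>\<in>\<Gamma>. line_int \<mu> \<gamma> g \<ge> 1)}.
       \<integral>\<^sup>+ x. epowr (g x) p \<partial>m)"

definition p_ae_paths :: "real \<Rightarrow> 'a::topological_space measure \<Rightarrow> 'a measure \<Rightarrow> 'a cpath set \<Rightarrow> ('a cpath \<Rightarrow> bool) \<Rightarrow> bool" where
  "p_ae_paths p m \<mu> \<Gamma>s P \<longleftrightarrow> (\<exists>\<Gamma>0 \<subseteq> \<Gamma>s. Modp p m \<mu> \<Gamma>0 = 0 \<and> (\<forall>\<gamma>\<in>\<Gamma>s - \<Gamma>0. P \<gamma>))"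

definition upper_gradient_ineq :: "'a measure \<Rightarrow> ('a \<Rightarrow> real) \<Rightarrow> ('a \<Rightarrow> ennreal) \<Rightarrow> 'a cpath \<Rightarrow> bool" where
  "upper_gradient_ineq \<mu> f \<rho> \<gamma> \<longleftrightarrow>
     ennreal \<bar>f (pf \<gamma> (pa \<gamma>)) - f (pf \<gamma> (pb \<gamma>))\<bar> \<le> line_int \<mu> \<gamma> \<rho>"

definition upper_gradient :: "'a::topological_space measure \<Rightarrow> 'a cpath set \<Rightarrow> ('a \<Rightarrow> real) \<Rightarrow> ('a \<Rightarrow> ennreal) \<Rightarrow> bool" where
  "upper_gradient \<mu> \<Gamma>s f \<rho> \<longleftrightarrow> \<rho> \<in> borel_measurable borel \<and> (\<forall>\<gamma>\<in>\<Gamma>s. upper_gradient_ineq \<mu> f \<rho> \<gamma>)"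

definition weak_upper_gradient :: "real \<Rightarrow> 'a::topological_space measure \<Rightarrow> 'a measure \<Rightarrow> 'a cpath set \<Rightarrow> ('a \<Rightarrow> real) \<Rightarrow> ('a \<Rightarrow> ennreal) \<Rightarrow> bool" where
  "weak_upper_gradient p m \<mu> \<Gamma>s f \<rho> \<longleftrightarrow> \<rho> \<in> borel_measurable borel \<and>
     p_ae_paths p m \<mu> \<Gamma>s (upper_gradient_ineq \<mu> f \<rho>)"

definition abs_cont_on :: "real \<Rightarrow> real \<Rightarrow> (real \<Rightarrow> real) \<Rightarrow> bool" where
  "abs_cont_on c d u \<longleftrightarrow> (\<forall>\<epsilon>>0. \<exists>\<delta>>0. \<forall>(n::nat) (I::nat \<Rightarrow> real \<times> real).
      (\<forall>i<n. c \<le> fst (I i) \<and> fst (I i) \<le> snd (I i) \<and> snd (I i) \<le> d) \<and>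
      (\<forall>i<n. \<forall>j<n. i \<noteq> j \<longrightarrow> snd (I i) \<le> fst (I j) \<or> snd (I j) \<le> fst (I i)) \<and>
      (\<Sum>i<n. snd (I i) - fst (I i)) < \<delta> \<longrightarrow>
      (\<Sum>i<n. \<bar>u (snd (I i)) - u (fst (I i))\<bar>) < \<epsilon>)"

definition hlen :: "'a measure \<Rightarrow> 'a cpath \<Rightarrow> real" where
  "hlen \<mu> \<gamma> = measure \<mu> (pIm \<gamma>)"

definition nu_path :: "'a measure \<Rightarrow> 'a cpath \<Rightarrow> real \<Rightarrow> real" where
  "nu_path \<mu> \<gamma> x = measure \<mu> (pf \<gamma> ` {pa \<gamma>..x})"

definition gamma_h :: "'a measure \<Rightarrow> 'a cpath \<Rightarrow> real \<Rightarrow> 'a" where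
  "gamma_h \<mu> \<gamma> = pf \<gamma> \<circ> inv_into {pa \<gamma>..pb \<gamma>} (nu_path \<mu> \<gamma>)"

definition ACC_p :: "real \<Rightarrow> 'a::topological_space measure \<Rightarrow> 'a measure \<Rightarrow> 'a cpath set \<Rightarrow> ('a \<Rightarrow> real) \<Rightarrow> bool" where
  "ACC_p p m \<mu> \<Gamma>s f \<longleftrightarrow> p_ae_paths p m \<mu> \<Gamma>s (\<lambda>\<gamma>. abs_cont_on 0 (hlen \<mu> \<gamma>) (f \<circ> gamma_h \<mu> \<gamma>))"

end

theory Submission
  imports Defs "HOL-Probability.Distribution_Functions"
begin

text \<open>
  Off an exceptional family of zero \<open>p\<close>-modulus, a path \<open>\<gamma>\<close> has \<open>f \<circ> \<gamma>\<^sub>h\<close> absolutely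
  continuous and meets the \<open>m\<close>-null set \<open>N\<close> (off which \<open>f\<close> vanishes on \<open>F\<close>) in a \<open>\<mu>\<close>-null set:
  the paths meeting \<open>N\<close> in positive measure have modulus zero, because \<open>\<infinity>\<close> on \<open>N\<close> is
  admissible for them and costs nothing. Transport \<open>\<mu>\<close> from the trace of \<open>\<gamma>\<close> to the parameter
  interval. Parameters where \<open>\<gamma>\<close> avoids \<open>F\<close> form an open set \<open>U\<close>, on which the upper gradient
  inequality for subpaths bounds the increments of \<open>f \<circ> \<gamma>\<close> by the integral of \<open>\<rho>\<close> off \<open>F\<close>;
  parameters where \<open>\<gamma>\<close> meets \<open>N\<close> lie in an open set \<open>V\<close> of small measure, on which
  absolute continuity makes the total increment small; elsewhere \<open>\<gamma>\<close> runs in \<open>F - N\<close>, where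
  \<open>f = 0\<close>. A tagged division subordinate to \<open>{U, V}\<close>, taken before the first and after the
  last zero of \<open>f \<circ> \<gamma>\<close>, yields the upper gradient inequality up to an arbitrary error.
\<close>

section \<open>Increment estimates on the real line\<close>

lemma sum_set_nn_integral_nonoverlapping_le:
  fixes M :: "real measure" and I :: "'i \<Rightarrow> real \<times> real"
  assumes M: "sets M = sets borel" "\<And>x. emeasure M {x} = 0"
    and w: "w \<in> borel_measurable borel"
    and "finite S"
    and nonoverlapping: "\<And>i j. i \<in> S \<Longrightarrow> j \<in> S \<Longrightarrow> i \<noteq> j \<Longrightarrow>
                           snd (I i) \<le> fst (I j) \<or> snd (I j) \<le> fst (I i)"
    and sub: "\<And>i. i \<in> S \<Longrightarrow> {fst (I i)..snd (I i)} \<subseteq> A"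
  shows "(\<Sum>i\<in>S. \<integral>\<^sup>+x\<in>{fst (I i)..snd (I i)}. w x \<partial>M) \<le> (\<integral>\<^sup>+x\<in>A. w x \<partial>M)"
proof -
  let ?J = "\<lambda>i. {fst (I i)..snd (I i)}"
  have "AE x in M. x \<notin> fst ` I ` S \<union> snd ` I ` S"
    by (rule AE_discrete_difference) (simp_all add: M \<open>finite S\<close> countable_finite)
  then have "AE x in M. (\<Sum>i\<in>S. w x * indicator (?J i) x) \<le> w x * indicator A x"
  proof eventually_elim
    case (elim x)
    show ?case
    proof (cases "\<exists>i\<in>S. x \<in> ?J i")
      case True
      then obtain i where i: "i \<in> S" "x \<in> ?J i" by blast
      \<comment> \<open>off the finitely many endpoints, \<open>x\<close> lies in the interior of at most one interval\<close>
      have "x \<notin> ?J j" if j: "j \<in> S - {i}" for j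
      proof -
        have "x \<noteq> fst (I k) \<and> x \<noteq> snd (I k)" if "k \<in> S" for k
          using elim that by auto
        then show ?thesis using i j nonoverlapping[of i j] by fastforce
      qed
      then have "(\<Sum>i\<in>S. w x * indicator (?J i) x) = w x * indicator (?J i) x"
        by (intro sum.remove[OF \<open>finite S\<close> i(1), THEN trans]) (auto intro!: sum.neutral)
      then show ?thesis using i sub[OF i(1)] by (auto simp: indicator_def)
    qed (auto intro!: sum.neutral)
  qed
  then have "(\<integral>\<^sup>+x. (\<Sum>i\<in>S. w x * indicator (?J i) x) \<partial>M) \<le> (\<integral>\<^sup>+x\<in>A. w x \<partial>M)"
    by (rule nn_integral_mono_AE)
  moreover have "(\<integral>\<^sup>+x. (\<Sum>i\<in>S. w x * indicator (?J i) x) \<partial>M) = (\<Sum>i\<in>S. \<integral>\<^sup>+x\<in>?J i. w x \<partial>M)"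
    using w by (intro nn_integral_sum) (simp_all add: measurable_cong_sets[OF M(1) refl])
  ultimately show ?thesis by simp
qed

definition small_variation_on :: "real set \<Rightarrow> (real \<Rightarrow> real) \<Rightarrow> real \<Rightarrow> bool" where
  "small_variation_on V u e \<longleftrightarrow> (\<forall>(n::nat) (I::nat \<Rightarrow> real \<times> real).
      (\<forall>i<n. fst (I i) < snd (I i) \<and> {fst (I i)..snd (I i)} \<subseteq> V) \<and>
      (\<forall>i<n. \<forall>j<n. i \<noteq> j \<longrightarrow> snd (I i) \<le> fst (I j) \<or> snd (I j) \<le> fst (I i)) \<longrightarrow>
      (\<Sum>i<n. \<bar>u (snd (I i)) - u (fst (I i))\<bar>) < e)"

lemma small_variation_on_pos: "small_variation_on V u e \<Longrightarrow> 0 < e"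
  unfolding small_variation_on_def by (erule allE[of _ 0]) simp

lemma small_variation_on_subset:
  "small_variation_on V u e \<Longrightarrow> W \<subseteq> V \<Longrightarrow> small_variation_on W u e"
  unfolding small_variation_on_def by blast

lemma small_variation_onD:
  assumes "small_variation_on V u e" and "finite S"
    and "\<And>i. i \<in> S \<Longrightarrow> fst (I i) < snd (I i) \<and> {fst (I i)..snd (I i)} \<subseteq> V"
    and "\<And>i j. i \<in> S \<Longrightarrow> j \<in> S \<Longrightarrow> i \<noteq> j \<Longrightarrow> snd (I i) \<le> fst (I j) \<or> snd (I j) \<le> fst (I i)"
  shows "(\<Sum>i\<in>S. \<bar>u (snd (I i)) - u (fst (I i))\<bar>) < e"
proof -
  obtain enum where enum: "bij_betw enum {..<card S} S"
    using ex_bij_betw_nat_finite[OF \<open>finite S\<close>] by (auto simp: atLeast0LessThan)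
  have in_S: "enum k \<in> S" if "k < card S" for k
    using enum that by (auto simp: bij_betw_def)
  have distinct: "enum k \<noteq> enum l" if "k < card S" "l < card S" "k \<noteq> l" for k l
    using enum that by (auto simp: bij_betw_def inj_on_def)
  have "(\<Sum>k<card S. \<bar>u (snd ((I \<circ> enum) k)) - u (fst ((I \<circ> enum) k))\<bar>) < e"
    using assms(1)[unfolded small_variation_on_def, rule_format, of "card S" "I \<circ> enum"]
      assms(3,4) in_S distinct by auto
  then show ?thesis
    using sum.reindex_bij_betw[OF enum, of "\<lambda>i. \<bar>u (snd (I i)) - u (fst (I i))\<bar>"] by simp
qed

lemma abs_cont_on_imp_continuous_on:
  assumes "abs_cont_on c d v"
  shows "continuous_on {c..d} v"
  unfolding continuous_on_iff
proof (intro ballI allI impI)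
  fix x e :: real assume x: "x \<in> {c..d}" and "0 < e"
  then obtain \<delta> where "\<delta> > 0" and \<delta>: "\<forall>(n::nat) (I::nat \<Rightarrow> real \<times> real).
      (\<forall>i<n. c \<le> fst (I i) \<and> fst (I i) \<le> snd (I i) \<and> snd (I i) \<le> d) \<and>
      (\<forall>i<n. \<forall>j<n. i \<noteq> j \<longrightarrow> snd (I i) \<le> fst (I j) \<or> snd (I j) \<le> fst (I i)) \<and>
      (\<Sum>i<n. snd (I i) - fst (I i)) < \<delta> \<longrightarrow>
      (\<Sum>i<n. \<bar>v (snd (I i)) - v (fst (I i))\<bar>) < e"
    using assms unfolding abs_cont_on_def by blast
  have "dist (v y) (v x) < e" if "y \<in> {c..d}" "dist y x < \<delta>" for y
    using \<delta>[rule_format, of 1 "\<lambda>_. (min x y, max x y)"] x that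
    by (cases "x \<le> y") (auto simp: dist_real_def abs_minus_commute)
  then show "\<exists>r>0. \<forall>y\<in>{c..d}. dist y x < r \<longrightarrow> dist (v y) (v x) < e"
    using \<open>\<delta> > 0\<close> by blast
qed

lemma nonoverlapping_if_disjoint_interiors:
  fixes c d c' d' :: real
  assumes "c < d" "c' < d'" "{c<..<d} \<inter> {c'<..<d'} = {}"
  shows "d \<le> c' \<or> d' \<le> c"
proof (rule ccontr)
  assume "\<not> (d \<le> c' \<or> d' \<le> c)"
  then have "(max c c' + min d d') / 2 \<in> {c<..<d} \<inter> {c'<..<d'}"
    using assms(1,2) by auto
  then show False using assms(3) by blast
qed

lemma tagged_division_interval_sums:
  fixes s t :: real
  assumes p: "p tagged_division_of {s..t}" and "s \<le> t"
  obtains S :: "(real \<times> real) set" where "finite S"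
    "\<And>c d. (c, d) \<in> S \<Longrightarrow> c < d \<and> (\<exists>x. (x, {c..d}) \<in> p)"
    "\<And>i j. i \<in> S \<Longrightarrow> j \<in> S \<Longrightarrow> i \<noteq> j \<Longrightarrow> snd i \<le> fst j \<or> snd j \<le> fst i"
    "\<And>u :: real \<Rightarrow> real. \<bar>u t - u s\<bar> \<le> (\<Sum>(c, d)\<in>S. \<bar>u d - u c\<bar>)"
proof -
  have "finite p" using p by blast
  define I where "I = (\<lambda>(x::real, k::real set). (Inf k, Sup k))"
  have cell: "k = {fst (I (x,k))..snd (I (x,k))} \<and> fst (I (x,k)) \<le> snd (I (x,k))"
    if xk: "(x,k) \<in> p" for x k
  proof -
    obtain c d where k: "k = cbox c d" using tagged_division_ofD(4)[OF p xk] by blast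
    moreover have "x \<in> k" using tagged_division_ofD(2)[OF p xk] .
    ultimately show ?thesis by (auto simp: I_def)
  qed
  define P where "P = {i\<in>p. fst (I i) < snd (I i)}"
  have nonoverlapping: "snd (I i) \<le> fst (I j) \<or> snd (I j) \<le> fst (I i)"
    if "i \<in> P" "j \<in> P" "i \<noteq> j" for i j
  proof -
    obtain x k x' k' where ij: "i = (x,k)" "j = (x',k')" by fastforce
    have "(x,k) \<in> p" "(x',k') \<in> p" "(x,k) \<noteq> (x',k')" using that ij by (auto simp: P_def)
    then have "interior k \<inter> interior k' = {}" by (rule tagged_division_ofD(5)[OF p])
    moreover have "k = {fst (I i)..snd (I i)}" "k' = {fst (I j)..snd (I j)}"
      using cell that ij by (auto simp: P_def)
    ultimately show ?thesis using nonoverlapping_if_disjoint_interiors that by (auto simp: P_def)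
  qed
  then have "inj_on I P" by (force simp: P_def intro: inj_onI)
  show thesis
  proof
    show "finite (I ` P)" using \<open>finite p\<close> by (simp add: P_def)
    show "c < d \<and> (\<exists>x. (x, {c..d}) \<in> p)" if cd: "(c, d) \<in> I ` P" for c d
    proof -
      obtain x k where "(x, k) \<in> P" "I (x, k) = (c, d)" using cd by force
      then show ?thesis using cell[of x k] by (auto simp: P_def)
    qed
    show "snd i \<le> fst j \<or> snd j \<le> fst i" if "i \<in> I ` P" "j \<in> I ` P" "i \<noteq> j" for i j
      using that nonoverlapping by blast
    fix u :: "real \<Rightarrow> real"
    have "\<bar>u t - u s\<bar> \<le> (\<Sum>i\<in>p. \<bar>u (snd (I i)) - u (fst (I i))\<bar>)"
      unfolding additive_tagged_division_1[OF \<open>s \<le> t\<close> p, symmetric] I_def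
      by (rule order_trans[OF sum_abs]) (auto simp: case_prod_beta intro!: sum_mono)
    also have "\<dots> = (\<Sum>i\<in>P. \<bar>u (snd (I i)) - u (fst (I i))\<bar>)"
    proof (rule sum.mono_neutral_right[OF \<open>finite p\<close>])
      show "\<forall>i\<in>p - P. \<bar>u (snd (I i)) - u (fst (I i))\<bar> = 0"
      proof
        fix i assume "i \<in> p - P"
        then have "fst (I i) = snd (I i)" using cell[of "fst i" "snd i"] by (auto simp: P_def)
        then show "\<bar>u (snd (I i)) - u (fst (I i))\<bar> = 0" by simp
      qed
    qed (auto simp: P_def)
    also have "\<dots> = (\<Sum>(c, d)\<in>I ` P. \<bar>u d - u c\<bar>)"
      by (simp add: sum.reindex[OF \<open>inj_on I P\<close>] case_prod_beta)
    finally show "\<bar>u t - u s\<bar> \<le> (\<Sum>(c, d)\<in>I ` P. \<bar>u d - u c\<bar>)" .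
  qed
qed

lemma division_subordinate_to_open_cover:
  fixes s t :: real
  assumes "open U" "open V" "s \<le> t" "{s..t} \<subseteq> U \<union> V"
  obtains S :: "(real \<times> real) set" where "finite S"
    "\<And>c d. (c, d) \<in> S \<Longrightarrow> c < d \<and> {c..d} \<subseteq> {s..t} \<and> ({c..d} \<subseteq> U \<or> {c..d} \<subseteq> V)"
    "\<And>i j. i \<in> S \<Longrightarrow> j \<in> S \<Longrightarrow> i \<noteq> j \<Longrightarrow> snd i \<le> fst j \<or> snd j \<le> fst i"
    "\<And>u :: real \<Rightarrow> real. \<bar>u t - u s\<bar> \<le> (\<Sum>(c, d)\<in>S. \<bar>u d - u c\<bar>)"
proof -
  \<comment> \<open>a gauge forcing each cell of a fine division into \<open>U\<close> or into \<open>V\<close>\<close>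
  define g where "g x = (if x \<in> U then U else if x \<in> V then V else UNIV)" for x :: real
  have "gauge g" unfolding gauge_def g_def using assms(1,2) by auto
  then obtain p where p: "p tagged_division_of {s..t}" "g fine p"
    using fine_division_exists_real by blast
  obtain S where S: "finite S" "\<And>c d. (c, d) \<in> S \<Longrightarrow> c < d \<and> (\<exists>x. (x, {c..d}) \<in> p)"
    "\<And>i j. i \<in> S \<Longrightarrow> j \<in> S \<Longrightarrow> i \<noteq> j \<Longrightarrow> snd i \<le> fst j \<or> snd j \<le> fst i"
    "\<And>u :: real \<Rightarrow> real. \<bar>u t - u s\<bar> \<le> (\<Sum>(c, d)\<in>S. \<bar>u d - u c\<bar>)"
    using tagged_division_interval_sums[OF p(1) \<open>s \<le> t\<close>] by metis
  have cells: "{c..d} \<subseteq> {s..t} \<and> ({c..d} \<subseteq> U \<or> {c..d} \<subseteq> V)" if cd: "(c, d) \<in> S" for c d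
  proof -
    obtain x where x: "(x, {c..d}) \<in> p" using S(2)[OF cd] by blast
    then have "x \<in> {c..d}" "{c..d} \<subseteq> {s..t}" "{c..d} \<subseteq> g x"
      using tagged_division_ofD(2,3)[OF p(1) x] p(2) by (auto simp: fine_def)
    moreover have "x \<in> U \<union> V" using \<open>x \<in> {c..d}\<close> \<open>{c..d} \<subseteq> {s..t}\<close> assms(4) by blast
    then have "g x \<subseteq> U \<or> g x \<subseteq> V" by (auto simp: g_def)
    ultimately show ?thesis by blast
  qed
  show thesis
  proof (rule that[OF S(1) _ S(3) S(4)])
    fix c d assume "(c, d) \<in> S"
    then show "c < d \<and> {c..d} \<subseteq> {s..t} \<and> ({c..d} \<subseteq> U \<or> {c..d} \<subseteq> V)"
      using S(2) cells by blast
  qed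
qed

lemma abs_diff_le_open_cover:
  fixes M :: "real measure" and u :: "real \<Rightarrow> real" and w :: "real \<Rightarrow> ennreal"
  assumes M: "sets M = sets borel" "\<And>x. emeasure M {x} = 0"
    and w: "w \<in> borel_measurable borel"
    and "open U" "open V" and "s \<le> t" and cover: "{s..t} \<subseteq> U \<union> V"
    and U_bound: "\<And>c d. c < d \<Longrightarrow> {c..d} \<subseteq> {s..t} \<inter> U \<Longrightarrow>
                    ennreal \<bar>u d - u c\<bar> \<le> (\<integral>\<^sup>+x\<in>{c..d}. w x \<partial>M)"
    and V_small: "small_variation_on ({s..t} \<inter> V) u e"
  shows "ennreal \<bar>u t - u s\<bar> \<le> (\<integral>\<^sup>+x\<in>{s..t}. w x \<partial>M) + ennreal e"
proof -
  obtain S where S: "finite S"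
    "\<And>c d. (c, d) \<in> S \<Longrightarrow> c < d \<and> {c..d} \<subseteq> {s..t} \<and> ({c..d} \<subseteq> U \<or> {c..d} \<subseteq> V)"
    "\<And>i j. i \<in> S \<Longrightarrow> j \<in> S \<Longrightarrow> i \<noteq> j \<Longrightarrow> snd i \<le> fst j \<or> snd j \<le> fst i"
    "\<bar>u t - u s\<bar> \<le> (\<Sum>(c, d)\<in>S. \<bar>u d - u c\<bar>)"
    using division_subordinate_to_open_cover[OF \<open>open U\<close> \<open>open V\<close> \<open>s \<le> t\<close> cover] by metis
  have S_cell: "fst i < snd i" "{fst i..snd i} \<subseteq> {s..t}" if "i \<in> S" for i
    using S(2)[of "fst i" "snd i"] that by simp_all
  define D where "D i = \<bar>u (snd i) - u (fst i)\<bar>" for i :: "real \<times> real"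
  define SU where "SU = {i\<in>S. {fst i..snd i} \<subseteq> U}"
  have "(\<Sum>(c, d)\<in>S. \<bar>u d - u c\<bar>) = (\<Sum>i\<in>SU. D i) + (\<Sum>i\<in>S - SU. D i)"
    using \<open>finite S\<close> by (simp add: D_def SU_def case_prod_beta sum.subset_diff[of SU S])
  then have split: "\<bar>u t - u s\<bar> \<le> (\<Sum>i\<in>SU. D i) + (\<Sum>i\<in>S - SU. D i)"
    using S(4) by simp
  have SU_bound: "ennreal (\<Sum>i\<in>SU. D i) \<le> (\<integral>\<^sup>+x\<in>{s..t}. w x \<partial>M)"
  proof -
    have "ennreal (\<Sum>i\<in>SU. D i) = (\<Sum>i\<in>SU. ennreal (D i))"
      by (simp add: D_def)
    also have "\<dots> \<le> (\<Sum>i\<in>SU. \<integral>\<^sup>+x\<in>{fst i..snd i}. w x \<partial>M)"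
    proof (rule sum_mono)
      fix i assume "i \<in> SU"
      then have "fst i < snd i" "{fst i..snd i} \<subseteq> {s..t} \<inter> U"
        using S_cell[of i] by (auto simp: SU_def)
      then show "ennreal (D i) \<le> (\<integral>\<^sup>+x\<in>{fst i..snd i}. w x \<partial>M)"
        unfolding D_def by (rule U_bound)
    qed
    also have "\<dots> \<le> (\<integral>\<^sup>+x\<in>{s..t}. w x \<partial>M)"
      using S(1,3) S_cell by (intro sum_set_nn_integral_nonoverlapping_le[OF M w]) (auto simp: SU_def)
    finally show ?thesis .
  qed
  have "(\<Sum>i\<in>S - SU. D i) < e"
    unfolding D_def
  proof (rule small_variation_onD[OF V_small, where I = "\<lambda>i. i"])
    fix i assume i: "i \<in> S - SU"
    then have "{fst i..snd i} \<subseteq> V" using S(2)[of "fst i" "snd i"] by (simp add: SU_def)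
    then show "fst i < snd i \<and> {fst i..snd i} \<subseteq> {s..t} \<inter> V" using S_cell[of i] i by blast
  qed (use S(1,3) in auto)
  then have "\<bar>u t - u s\<bar> \<le> (\<Sum>i\<in>SU. D i) + e"
    using split by linarith
  moreover have "0 \<le> (\<Sum>i\<in>SU. D i)" "0 \<le> e"
    using small_variation_on_pos[OF V_small] by (simp_all add: D_def sum_nonneg)
  ultimately have "ennreal \<bar>u t - u s\<bar> \<le> ennreal (\<Sum>i\<in>SU. D i) + ennreal e"
    by (simp add: ennreal_leI flip: ennreal_plus)
  then show ?thesis using SU_bound by (meson add_mono order_trans order_refl)
qed

lemma set_nn_integral_two_intervals_le:
  fixes M :: "real measure"
  assumes M: "sets M = sets borel" "\<And>x. emeasure M {x} = 0"
    and w: "w \<in> borel_measurable borel" and "a \<le> c" "c \<le> d" "d \<le> b"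
  shows "(\<integral>\<^sup>+x\<in>{a..c}. w x \<partial>M) + (\<integral>\<^sup>+x\<in>{d..b}. w x \<partial>M) \<le> (\<integral>\<^sup>+x\<in>{a..b}. w x \<partial>M)"
proof -
  define I where "I i = (if i then (a, c) else (d, b))" for i :: bool
  have "(\<Sum>i\<in>UNIV. \<integral>\<^sup>+x\<in>{fst (I i)..snd (I i)}. w x \<partial>M) \<le> (\<integral>\<^sup>+x\<in>{a..b}. w x \<partial>M)"
    using assms(4-6) by (intro sum_set_nn_integral_nonoverlapping_le[OF M w]) (auto simp: I_def)
  then show ?thesis by (simp add: UNIV_bool I_def add.commute)
qed

lemma closed_subset_interval_gaps:
  fixes G :: "real set"
  assumes "closed G" "G \<noteq> {}" "G \<subseteq> {a..b}"
  shows "Inf G \<in> G" "Sup G \<in> G" "Inf G \<le> Sup G"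
    and "{a<..<Inf G} \<subseteq> {a..b} - G" "{Sup G<..<b} \<subseteq> {a..b} - G"
proof -
  have "bdd_below G" "bdd_above G"
    using bdd_below_mono[OF bdd_below_Icc assms(3)] bdd_above_mono[OF bdd_above_Icc assms(3)] .
  then show G: "Inf G \<in> G" "Sup G \<in> G"
    using closed_contains_Inf[OF assms(2) _ assms(1)] closed_contains_Sup[OF assms(2) _ assms(1)] by blast+
  show "Inf G \<le> Sup G" using cInf_le_cSup[OF assms(2) \<open>bdd_above G\<close> \<open>bdd_below G\<close>] .
  show "{a<..<Inf G} \<subseteq> {a..b} - G"
    using cInf_lower[OF _ \<open>bdd_below G\<close>] G assms(3) by fastforce
  show "{Sup G<..<b} \<subseteq> {a..b} - G"
    using cSup_upper[OF _ \<open>bdd_above G\<close>] G assms(3) by fastforce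
qed

lemma abs_diff_le_open_cover_interior:
  fixes M :: "real measure" and u :: "real \<Rightarrow> real" and w :: "real \<Rightarrow> ennreal"
  assumes M: "sets M = sets borel" "\<And>x. emeasure M {x} = 0"
    and w: "w \<in> borel_measurable borel"
    and "open U" "open V" and "s \<le> t" and cover: "{s<..<t} \<subseteq> U \<union> V"
    and u: "continuous_on {s..t} u"
    and U_bound: "\<And>c d. c < d \<Longrightarrow> {c..d} \<subseteq> {s..t} \<inter> U \<Longrightarrow>
                    ennreal \<bar>u d - u c\<bar> \<le> (\<integral>\<^sup>+x\<in>{c..d}. w x \<partial>M)"
    and V_small: "small_variation_on ({s..t} \<inter> V) u e"
  shows "ennreal \<bar>u t - u s\<bar> \<le> (\<integral>\<^sup>+x\<in>{s..t}. w x \<partial>M) + ennreal e"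
proof (cases "s < t \<and> (\<integral>\<^sup>+x\<in>{s..t}. w x \<partial>M) \<noteq> \<infinity>")
  case False
  then show ?thesis using \<open>s \<le> t\<close> by auto
next
  case True
  then have "s < t" by blast
  from True obtain W where W: "(\<integral>\<^sup>+x\<in>{s..t}. w x \<partial>M) = ennreal W" "0 \<le> W"
    by (cases "\<integral>\<^sup>+x\<in>{s..t}. w x \<partial>M" rule: ennreal_cases) auto
  have "0 < e" using V_small by (rule small_variation_on_pos)
  have inner: "\<bar>u (snd z) - u (fst z)\<bar> \<le> W + e" if "z \<in> {s<..<t} \<times> {s<..<t}" for z
  proof -
    define x y where "x = min (fst z) (snd z)" and "y = max (fst z) (snd z)"
    have xy: "s < x" "x \<le> y" "y < t" using that by (auto simp: x_def y_def)
    have "ennreal \<bar>u y - u x\<bar> \<le> (\<integral>\<^sup>+r\<in>{x..y}. w r \<partial>M) + ennreal e"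
    proof (rule abs_diff_le_open_cover[OF M w \<open>open U\<close> \<open>open V\<close> \<open>x \<le> y\<close>])
      have "{x..y} \<subseteq> {s<..<t}" using xy by auto
      then show "{x..y} \<subseteq> U \<union> V" using cover by blast
      show "small_variation_on ({x..y} \<inter> V) u e"
        by (rule small_variation_on_subset[OF V_small]) (use xy in auto)
    qed (use U_bound xy in auto)
    also have "\<dots> \<le> ennreal (W + e)"
      using W \<open>0 < e\<close> xy by (auto intro!: add_mono nn_set_integral_set_mono simp flip: W(1))
    finally have "\<bar>u y - u x\<bar> \<le> W + e"
      using W(2) \<open>0 < e\<close> by (simp add: ennreal_le_iff del: ennreal_plus)
    then show ?thesis by (auto simp: x_def y_def abs_minus_commute min_def max_def split: if_splits)
  qed
  have "continuous_on ({s..t} \<times> {s..t}) (\<lambda>z. \<bar>u (snd z) - u (fst z)\<bar>)"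
    by (intro continuous_intros continuous_on_compose2[OF u]) auto
  then have "\<bar>u t - u s\<bar> \<le> W + e"
    using continuous_le_on_closure[of "{s<..<t} \<times> {s<..<t}" "\<lambda>z. \<bar>u (snd z) - u (fst z)\<bar>" "(s,t)"]
      inner \<open>s < t\<close>
    by (simp add: closure_Times)
  then show ?thesis using W \<open>0 < e\<close> by (simp add: ennreal_leI flip: ennreal_plus)
qed

lemma abs_diff_le_cover_off_zeros:
  fixes M :: "real measure" and u :: "real \<Rightarrow> real" and w :: "real \<Rightarrow> ennreal"
  assumes M: "sets M = sets borel" "\<And>x. emeasure M {x} = 0"
    and w: "w \<in> borel_measurable borel"
    and "open U" "open V" and "a \<le> b"
    and u: "continuous_on {a..b} u"
    and zero: "\<And>t. t \<in> {a..b} - (U \<union> V) \<Longrightarrow> u t = 0"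
    and U_bound: "\<And>c d. c < d \<Longrightarrow> {c..d} \<subseteq> {a..b} \<inter> U \<Longrightarrow>
                    ennreal \<bar>u d - u c\<bar> \<le> (\<integral>\<^sup>+x\<in>{c..d}. w x \<partial>M)"
    and V_small: "small_variation_on ({a..b} \<inter> V) u e"
  shows "ennreal \<bar>u b - u a\<bar> \<le> (\<integral>\<^sup>+x\<in>{a..b}. w x \<partial>M) + 2 * ennreal e"
proof -
  define G where "G = {a..b} - (U \<union> V)"
  have estimate: "ennreal \<bar>u t - u s\<bar> \<le> (\<integral>\<^sup>+x\<in>{s..t}. w x \<partial>M) + ennreal e"
    if "a \<le> s" "s \<le> t" "t \<le> b" "{s<..<t} \<subseteq> {a..b} - G" for s t
  proof (rule abs_diff_le_open_cover_interior[OF M w \<open>open U\<close> \<open>open V\<close> that(2)])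
    show "{s<..<t} \<subseteq> U \<union> V" using that(4) by (auto simp: G_def)
    show "continuous_on {s..t} u" using u by (rule continuous_on_subset) (use that in auto)
    show "small_variation_on ({s..t} \<inter> V) u e"
      using V_small by (rule small_variation_on_subset) (use that in auto)
  qed (use U_bound that in auto)
  show ?thesis
  proof (cases "G = {}")
    case True
    then have "ennreal \<bar>u b - u a\<bar> \<le> (\<integral>\<^sup>+x\<in>{a..b}. w x \<partial>M) + ennreal e"
      using \<open>a \<le> b\<close> by (intro estimate) auto
    then show ?thesis by (rule order_trans) (auto intro: add_mono simp: mult_2)
  next
    case False
    \<comment> \<open>only the first and the last zero of \<open>u\<close> outside \<open>U \<union> V\<close> matter\<close>
    have "closed G" "G \<subseteq> {a..b}" using \<open>open U\<close> \<open>open V\<close> by (auto simp: G_def intro!: closed_Diff)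
    note gaps = closed_subset_interval_gaps[OF this(1) False this(2)]
    have "a \<le> Inf G" "Sup G \<le> b" "u (Inf G) = 0" "u (Sup G) = 0"
      using gaps(1,2) zero by (auto simp: G_def)
    have "\<bar>u b - u a\<bar> \<le> \<bar>u (Inf G) - u a\<bar> + \<bar>u b - u (Sup G)\<bar>"
      using \<open>u (Inf G) = 0\<close> \<open>u (Sup G) = 0\<close> by linarith
    then have "ennreal \<bar>u b - u a\<bar> \<le> ennreal \<bar>u (Inf G) - u a\<bar> + ennreal \<bar>u b - u (Sup G)\<bar>"
      by (simp add: ennreal_leI flip: ennreal_plus)
    also have "\<dots> \<le> ((\<integral>\<^sup>+x\<in>{a..Inf G}. w x \<partial>M) + ennreal e) + ((\<integral>\<^sup>+x\<in>{Sup G..b}. w x \<partial>M) + ennreal e)"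
      using gaps \<open>a \<le> Inf G\<close> gaps(3) \<open>Sup G \<le> b\<close> by (intro add_mono estimate) auto
    also have "\<dots> = ((\<integral>\<^sup>+x\<in>{a..Inf G}. w x \<partial>M) + (\<integral>\<^sup>+x\<in>{Sup G..b}. w x \<partial>M)) + 2 * ennreal e"
      by (simp only: mult_2 add.assoc add.left_commute add.commute)
    also have "\<dots> \<le> (\<integral>\<^sup>+x\<in>{a..b}. w x \<partial>M) + 2 * ennreal e"
      using \<open>a \<le> Inf G\<close> gaps(3) \<open>Sup G \<le> b\<close>
      by (intro add_right_mono set_nn_integral_two_intervals_le[OF M w])
    finally show ?thesis .
  qed
qed

lemma abs_cont_on_comp_mono:
  fixes \<nu> v :: "real \<Rightarrow> real"
  assumes v: "abs_cont_on 0 h v" and "0 < e"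
    and \<nu>_mono: "mono_on {a..b} \<nu>" and \<nu>_range: "\<nu> ` {a..b} \<subseteq> {0..h}"
  obtains \<delta> where "0 < \<delta>"
    "\<And>(n::nat) (I::nat \<Rightarrow> real \<times> real). \<forall>i<n. a \<le> fst (I i) \<and> fst (I i) \<le> snd (I i) \<and> snd (I i) \<le> b \<Longrightarrow>
      \<forall>i<n. \<forall>j<n. i \<noteq> j \<longrightarrow> snd (I i) \<le> fst (I j) \<or> snd (I j) \<le> fst (I i) \<Longrightarrow>
      (\<Sum>i<n. \<nu> (snd (I i)) - \<nu> (fst (I i))) < \<delta> \<Longrightarrow>
      (\<Sum>i<n. \<bar>v (\<nu> (snd (I i))) - v (\<nu> (fst (I i)))\<bar>) < e"
proof -
  obtain \<delta> where "0 < \<delta>" and \<delta>: "\<forall>(n::nat) (J::nat \<Rightarrow> real \<times> real).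
      (\<forall>i<n. 0 \<le> fst (J i) \<and> fst (J i) \<le> snd (J i) \<and> snd (J i) \<le> h) \<and>
      (\<forall>i<n. \<forall>j<n. i \<noteq> j \<longrightarrow> snd (J i) \<le> fst (J j) \<or> snd (J j) \<le> fst (J i)) \<and>
      (\<Sum>i<n. snd (J i) - fst (J i)) < \<delta> \<longrightarrow>
      (\<Sum>i<n. \<bar>v (snd (J i)) - v (fst (J i))\<bar>) < e"
    using v \<open>0 < e\<close> unfolding abs_cont_on_def by blast
  show thesis
  proof (rule that[OF \<open>0 < \<delta>\<close>])
    fix n :: nat and I :: "nat \<Rightarrow> real \<times> real"
    assume I: "\<forall>i<n. a \<le> fst (I i) \<and> fst (I i) \<le> snd (I i) \<and> snd (I i) \<le> b"
      and nonoverlapping: "\<forall>i<n. \<forall>j<n. i \<noteq> j \<longrightarrow> snd (I i) \<le> fst (I j) \<or> snd (I j) \<le> fst (I i)"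
      and short: "(\<Sum>i<n. \<nu> (snd (I i)) - \<nu> (fst (I i))) < \<delta>"
    have mono: "\<nu> x \<le> \<nu> y" if "x \<in> {a..b}" "y \<in> {a..b}" "x \<le> y" for x y
      using \<nu>_mono that by (rule mono_onD)
    define J where "J i = (\<nu> (fst (I i)), \<nu> (snd (I i)))" for i
    have "\<forall>i<n. 0 \<le> fst (J i) \<and> fst (J i) \<le> snd (J i) \<and> snd (J i) \<le> h"
    proof (intro allI impI)
      fix i assume "i < n"
      then have "fst (I i) \<in> {a..b}" "snd (I i) \<in> {a..b}" "fst (I i) \<le> snd (I i)" using I by auto
      then show "0 \<le> fst (J i) \<and> fst (J i) \<le> snd (J i) \<and> snd (J i) \<le> h"
        using \<nu>_range mono unfolding J_def by (simp add: image_subset_iff)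
    qed
    moreover have "\<forall>i<n. \<forall>j<n. i \<noteq> j \<longrightarrow> snd (J i) \<le> fst (J j) \<or> snd (J j) \<le> fst (J i)"
    proof (intro allI impI)
      fix i j assume ij: "i < n" "j < n" "i \<noteq> j"
      then have "fst (I i) \<in> {a..b}" "snd (I i) \<in> {a..b}" "fst (I j) \<in> {a..b}" "snd (I j) \<in> {a..b}"
        using I by auto
      moreover have "snd (I i) \<le> fst (I j) \<or> snd (I j) \<le> fst (I i)" using nonoverlapping ij by blast
      ultimately show "snd (J i) \<le> fst (J j) \<or> snd (J j) \<le> fst (J i)"
        unfolding J_def using mono by auto
    qed
    moreover have "(\<Sum>i<n. snd (J i) - fst (J i)) < \<delta>" using short by (simp add: J_def)
    ultimately have "(\<Sum>i<n. \<bar>v (snd (J i)) - v (fst (J i))\<bar>) < e"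
      using \<delta> by blast
    then show "(\<Sum>i<n. \<bar>v (\<nu> (snd (I i))) - v (\<nu> (fst (I i)))\<bar>) < e"
      by (simp add: J_def)
  qed
qed

lemma small_variation_on_reparametrization:
  fixes M :: "real measure" and \<nu> v u :: "real \<Rightarrow> real"
  assumes M: "sets M = sets borel" "\<And>x. emeasure M {x} = 0" "finite_measure M"
    and \<nu>_diff: "\<And>c d. a \<le> c \<Longrightarrow> c \<le> d \<Longrightarrow> d \<le> b \<Longrightarrow> \<nu> d - \<nu> c = measure M {c..d}"
    and \<nu>_range: "\<And>t. t \<in> {a..b} \<Longrightarrow> \<nu> t \<in> {0..h}"
    and u: "\<And>t. t \<in> {a..b} \<Longrightarrow> u t = v (\<nu> t)"
    and v: "abs_cont_on 0 h v" and "0 < e"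
  shows "\<exists>\<delta>>0. \<forall>V\<in>sets M. emeasure M V < ennreal \<delta> \<longrightarrow> small_variation_on ({a..b} \<inter> V) u e"
proof -
  interpret finite_measure M by (rule M(3))
  have mono: "mono_on {a..b} \<nu>"
  proof (rule mono_onI)
    fix r s assume "r \<in> {a..b}" "s \<in> {a..b}" "r \<le> s"
    then have "\<nu> s - \<nu> r = measure M {r..s}" using \<nu>_diff by simp
    then show "\<nu> r \<le> \<nu> s" using measure_nonneg[of M "{r..s}"] by linarith
  qed
  have "\<nu> ` {a..b} \<subseteq> {0..h}" using \<nu>_range by blast
  then obtain \<delta> where "0 < \<delta>" and \<delta>: "\<And>(n::nat) (I::nat \<Rightarrow> real \<times> real).
      \<forall>i<n. a \<le> fst (I i) \<and> fst (I i) \<le> snd (I i) \<and> snd (I i) \<le> b \<Longrightarrow>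
      \<forall>i<n. \<forall>j<n. i \<noteq> j \<longrightarrow> snd (I i) \<le> fst (I j) \<or> snd (I j) \<le> fst (I i) \<Longrightarrow>
      (\<Sum>i<n. \<nu> (snd (I i)) - \<nu> (fst (I i))) < \<delta> \<Longrightarrow>
      (\<Sum>i<n. \<bar>v (\<nu> (snd (I i))) - v (\<nu> (fst (I i)))\<bar>) < e"
    using abs_cont_on_comp_mono[OF v \<open>0 < e\<close> mono] by blast
  have "small_variation_on ({a..b} \<inter> V) u e" if V: "V \<in> sets M" "emeasure M V < ennreal \<delta>" for V
    unfolding small_variation_on_def
  proof (intro allI impI, elim conjE)
    fix n :: nat and I :: "nat \<Rightarrow> real \<times> real"
    assume I: "\<forall>i<n. fst (I i) < snd (I i) \<and> {fst (I i)..snd (I i)} \<subseteq> {a..b} \<inter> V"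
      and nonoverlapping: "\<forall>i<n. \<forall>j<n. i \<noteq> j \<longrightarrow> snd (I i) \<le> fst (I j) \<or> snd (I j) \<le> fst (I i)"
    have in_ab: "\<forall>i<n. a \<le> fst (I i) \<and> fst (I i) \<le> snd (I i) \<and> snd (I i) \<le> b"
      using I by auto
    have "(\<Sum>i<n. \<nu> (snd (I i)) - \<nu> (fst (I i))) = (\<Sum>i<n. measure M {fst (I i)..snd (I i)})"
    proof (rule sum.cong)
      fix i assume "i \<in> {..<n}"
      then show "\<nu> (snd (I i)) - \<nu> (fst (I i)) = measure M {fst (I i)..snd (I i)}"
        using \<nu>_diff[of "fst (I i)" "snd (I i)"] in_ab by simp
    qed simp
    also have "\<dots> \<le> measure M V"
    proof -
      have "(\<Sum>i<n. \<integral>\<^sup>+x\<in>{fst (I i)..snd (I i)}. 1 \<partial>M) \<le> (\<integral>\<^sup>+x\<in>V. 1 \<partial>M)"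
        using nonoverlapping I by (intro sum_set_nn_integral_nonoverlapping_le[OF M(1,2)]) auto
      then have "ennreal (\<Sum>i<n. measure M {fst (I i)..snd (I i)}) \<le> ennreal (measure M V)"
        using \<open>V \<in> sets M\<close> M(1) by (simp add: emeasure_eq_measure sum_ennreal)
      then show ?thesis by (simp add: ennreal_le_iff)
    qed
    also have "\<dots> < \<delta>"
      using V by (simp add: emeasure_eq_measure ennreal_less_iff)
    finally have "(\<Sum>i<n. \<bar>v (\<nu> (snd (I i))) - v (\<nu> (fst (I i)))\<bar>) < e"
      using \<delta>[OF in_ab nonoverlapping] by blast
    moreover have "(\<Sum>i<n. \<bar>u (snd (I i)) - u (fst (I i))\<bar>) = (\<Sum>i<n. \<bar>v (\<nu> (snd (I i))) - v (\<nu> (fst (I i)))\<bar>)"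
    proof (rule sum.cong)
      fix i assume "i \<in> {..<n}"
      then show "\<bar>u (snd (I i)) - u (fst (I i))\<bar> = \<bar>v (\<nu> (snd (I i))) - v (\<nu> (fst (I i)))\<bar>"
        using u[of "fst (I i)"] u[of "snd (I i)"] in_ab[rule_format, of i] by simp
    qed simp
    ultimately show "(\<Sum>i<n. \<bar>u (snd (I i)) - u (fst (I i))\<bar>) < e" by simp
  qed
  with \<open>0 < \<delta>\<close> show ?thesis by blast
qed

lemma abs_diff_le_zero_off_open_null:
  fixes M :: "real measure" and u :: "real \<Rightarrow> real" and w :: "real \<Rightarrow> ennreal"
  assumes M: "sets M = sets borel" "\<And>x. emeasure M {x} = 0" "finite_measure M"
    and w: "w \<in> borel_measurable borel"
    and "open U" and B: "B \<in> sets borel" "emeasure M B = 0" and "a \<le> b"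
    and u: "continuous_on {a..b} u"
    and zero: "\<And>t. t \<in> {a..b} - (U \<union> B) \<Longrightarrow> u t = 0"
    and U_bound: "\<And>c d. c < d \<Longrightarrow> {c..d} \<subseteq> {a..b} \<inter> U \<Longrightarrow>
                    ennreal \<bar>u d - u c\<bar> \<le> (\<integral>\<^sup>+x\<in>{c..d}. w x \<partial>M)"
    and small: "\<And>e. 0 < e \<Longrightarrow> \<exists>\<delta>>0. \<forall>V\<in>sets M. emeasure M V < ennreal \<delta> \<longrightarrow>
                   small_variation_on ({a..b} \<inter> V) u e"
  shows "ennreal \<bar>u b - u a\<bar> \<le> (\<integral>\<^sup>+x\<in>{a..b}. w x \<partial>M)"
proof (rule ennreal_le_epsilon)
  interpret finite_measure M by (rule M(3))
  fix e :: real assume "0 < e"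
  then obtain \<delta> where "0 < \<delta>"
    and \<delta>: "\<And>V. V \<in> sets M \<Longrightarrow> emeasure M V < ennreal \<delta> \<Longrightarrow> small_variation_on ({a..b} \<inter> V) u (e / 2)"
    using small[of "e / 2"] by auto
  have "(INF V\<in>{V. B \<subseteq> V \<and> open V}. emeasure M V) < ennreal \<delta>"
    using outer_regular[OF M(1) _ B(1)] emeasure_finite B(2) \<open>0 < \<delta>\<close> by simp
  then obtain V where V: "B \<subseteq> V" "open V" "emeasure M V < ennreal \<delta>"
    by (auto simp: INF_less_iff)
  have "ennreal \<bar>u b - u a\<bar> \<le> (\<integral>\<^sup>+x\<in>{a..b}. w x \<partial>M) + 2 * ennreal (e / 2)"
  proof (rule abs_diff_le_cover_off_zeros[OF M(1,2) w \<open>open U\<close> \<open>open V\<close> \<open>a \<le> b\<close> u _ U_bound])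
    show "u t = 0" if "t \<in> {a..b} - (U \<union> V)" for t
      using that V(1) by (intro zero) auto
    show "small_variation_on ({a..b} \<inter> V) u (e / 2)"
      using V M(1) by (intro \<delta>) auto
  qed
  also have "2 * ennreal (e / 2) = ennreal e"
    using \<open>0 < e\<close> ennreal_plus[of "e / 2" "e / 2"] by (simp add: mult_2)
  finally show "ennreal \<bar>u b - u a\<bar> \<le> (\<integral>\<^sup>+x\<in>{a..b}. w x \<partial>M) + ennreal e" .
qed

section \<open>Parametrizing a path by the measure of its trace\<close>

lemma Gamma_muD:
  assumes "\<gamma> \<in> Gamma_mu \<mu>"
  shows "is_cpath \<gamma>" "pa \<gamma> < pb \<gamma>" "continuous_on {pa \<gamma>..pb \<gamma>} (pf \<gamma>)"
    and "inj_on (pf \<gamma>) {pa \<gamma>..pb \<gamma>}"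
    and "\<And>c d. pa \<gamma> \<le> c \<Longrightarrow> c < d \<Longrightarrow> d \<le> pb \<gamma> \<Longrightarrow>
           0 < emeasure \<mu> (pf \<gamma> ` {c..d}) \<and> emeasure \<mu> (pf \<gamma> ` {c..d}) < \<infinity>"
  using assms by (auto simp: Gamma_mu_def is_cpath_def)

lemma cpath_continuous_extension:
  assumes "is_cpath \<gamma>"
  obtains h where "continuous_on UNIV h" "\<And>t. t \<in> {pa \<gamma>..pb \<gamma>} \<Longrightarrow> h t = pf \<gamma> t"
proof
  let ?clamp = "\<lambda>t. max (pa \<gamma>) (min (pb \<gamma>) t)"
  have "continuous_on UNIV ?clamp" "?clamp ` UNIV \<subseteq> {pa \<gamma>..pb \<gamma>}"
    using assms by (auto simp: is_cpath_def intro!: continuous_intros)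
  then show "continuous_on UNIV (pf \<gamma> \<circ> ?clamp)"
    using assms unfolding is_cpath_def by (intro continuous_on_compose) (auto elim: continuous_on_subset)
qed auto

text \<open>\<open>\<mu>\<close> on the trace of \<open>\<gamma>\<close>, transported to the parameter interval; on that interval,
  \<open>nu_path \<mu> \<gamma>\<close> is its distribution function.\<close>
definition path_measure :: "'a::topological_space measure \<Rightarrow> 'a cpath \<Rightarrow> real measure" where
  "path_measure \<mu> \<gamma> = distr (restrict_space \<mu> (pIm \<gamma>)) borel (inv_into {pa \<gamma>..pb \<gamma>} (pf \<gamma>))"

lemma sets_path_measure [simp]: "sets (path_measure \<mu> \<gamma>) = sets borel"
  and space_path_measure [simp]: "space (path_measure \<mu> \<gamma>) = UNIV"
  by (simp_all add: path_measure_def)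

context
  fixes \<mu> :: "'a::t2_space measure" and \<gamma> :: "'a cpath"
  assumes sets_\<mu>: "sets \<mu> = sets borel" and \<gamma>: "\<gamma> \<in> Gamma_mu \<mu>"
begin

lemma pIm_in_sets: "pIm \<gamma> \<in> sets \<mu>"
  using Gamma_muD(3)[OF \<gamma>] sets_\<mu> unfolding pIm_def
  by (simp add: compact_imp_closed compact_continuous_image)

lemma measurable_inv_into_path:
  "inv_into {pa \<gamma>..pb \<gamma>} (pf \<gamma>) \<in> measurable (restrict_space \<mu> (pIm \<gamma>)) borel"
proof -
  have "continuous_on (pIm \<gamma>) (inv_into {pa \<gamma>..pb \<gamma>} (pf \<gamma>))"
    unfolding pIm_def using Gamma_muD(3,4)[OF \<gamma>] by (intro continuous_on_inv) auto
  then show ?thesis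
    using borel_measurable_continuous_on_restrict
    by (subst measurable_cong_sets[OF sets_restrict_space_cong[OF sets_\<mu>] refl]) blast
qed

lemma emeasure_path_measure:
  assumes "A \<in> sets borel"
  shows "emeasure (path_measure \<mu> \<gamma>) A = emeasure \<mu> (pf \<gamma> ` (A \<inter> {pa \<gamma>..pb \<gamma>}))"
proof -
  have "emeasure (path_measure \<mu> \<gamma>) A = emeasure \<mu> (inv_into {pa \<gamma>..pb \<gamma>} (pf \<gamma>) -` A \<inter> pIm \<gamma>)"
    using assms pIm_in_sets measurable_inv_into_path
    by (simp add: path_measure_def emeasure_distr emeasure_restrict_space space_restrict_space sets_eq_imp_space_eq[OF sets_\<mu>])
  also have "inv_into {pa \<gamma>..pb \<gamma>} (pf \<gamma>) -` A \<inter> pIm \<gamma> = pf \<gamma> ` (A \<inter> {pa \<gamma>..pb \<gamma>})"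
    using Gamma_muD(4)[OF \<gamma>] unfolding pIm_def by (auto simp: inv_into_f_f)
  finally show ?thesis .
qed

lemma nn_integral_path_measure:
  assumes w: "w \<in> borel_measurable borel" and "pa \<gamma> \<le> c" "d \<le> pb \<gamma>"
  shows "(\<integral>\<^sup>+x\<in>pf \<gamma> ` {c..d}. w x \<partial>\<mu>) = (\<integral>\<^sup>+t\<in>{c..d}. w (pf \<gamma> t) \<partial>path_measure \<mu> \<gamma>)"
proof -
  let ?\<psi> = "inv_into {pa \<gamma>..pb \<gamma>} (pf \<gamma>)"
  obtain h where h: "continuous_on UNIV h" "\<And>t. t \<in> {pa \<gamma>..pb \<gamma>} \<Longrightarrow> h t = pf \<gamma> t"
    using cpath_continuous_extension[OF Gamma_muD(1)[OF \<gamma>]] by blast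
  have "(\<lambda>t. w (h t) * indicator {c..d} t) \<in> borel_measurable borel"
    using w borel_measurable_continuous_onI[OF h(1)] by measurable
  then have "(\<integral>\<^sup>+t. w (h t) * indicator {c..d} t \<partial>path_measure \<mu> \<gamma>)
      = (\<integral>\<^sup>+x. w (h (?\<psi> x)) * indicator {c..d} (?\<psi> x) * indicator (pIm \<gamma>) x \<partial>\<mu>)"
    unfolding path_measure_def using pIm_in_sets sets_eq_imp_space_eq[OF sets_\<mu>]
    by (simp add: nn_integral_distr[OF measurable_inv_into_path] nn_integral_restrict_space)
  also have "\<dots> = (\<integral>\<^sup>+x\<in>pf \<gamma> ` {c..d}. w x \<partial>\<mu>)"
  proof (rule nn_integral_cong)
    fix x
    have "h (?\<psi> x) = x" "?\<psi> x \<in> {c..d} \<longleftrightarrow> x \<in> pf \<gamma> ` {c..d}" if "x \<in> pIm \<gamma>"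
      using that Gamma_muD(4)[OF \<gamma>] h(2) \<open>pa \<gamma> \<le> c\<close> \<open>d \<le> pb \<gamma>\<close> unfolding pIm_def
      by (auto simp: inv_into_f_f f_inv_into_f inv_into_into)
    moreover have "pf \<gamma> ` {c..d} \<subseteq> pIm \<gamma>"
      using \<open>pa \<gamma> \<le> c\<close> \<open>d \<le> pb \<gamma>\<close> unfolding pIm_def by auto
    ultimately show "w (h (?\<psi> x)) * indicator {c..d} (?\<psi> x) * indicator (pIm \<gamma>) x
        = w x * indicator (pf \<gamma> ` {c..d}) x"
      by (auto simp: indicator_def)
  qed
  also have "(\<integral>\<^sup>+t. w (h t) * indicator {c..d} t \<partial>path_measure \<mu> \<gamma>)
      = (\<integral>\<^sup>+t\<in>{c..d}. w (pf \<gamma> t) \<partial>path_measure \<mu> \<gamma>)"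
    using h(2) \<open>pa \<gamma> \<le> c\<close> \<open>d \<le> pb \<gamma>\<close> by (intro nn_integral_cong) (auto simp: indicator_def)
  finally show ?thesis ..
qed

lemma finite_measure_path_measure: "finite_measure (path_measure \<mu> \<gamma>)"
proof (rule finite_measureI)
  have "emeasure (path_measure \<mu> \<gamma>) UNIV = emeasure \<mu> (pf \<gamma> ` {pa \<gamma>..pb \<gamma>})"
    using emeasure_path_measure[of UNIV] by simp
  then show "emeasure (path_measure \<mu> \<gamma>) (space (path_measure \<mu> \<gamma>)) \<noteq> \<infinity>"
    using Gamma_muD(5)[OF \<gamma> order_refl Gamma_muD(2)[OF \<gamma>] order_refl]
    by auto
qed

context
  assumes atomless: "\<And>x. emeasure \<mu> {x} = 0"
begin

lemma emeasure_path_measure_singleton: "emeasure (path_measure \<mu> \<gamma>) {t} = 0"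
  using emeasure_path_measure[of "{t}"] atomless
  by (cases "t \<in> {pa \<gamma>..pb \<gamma>}") auto

lemma nu_path_diff:
  assumes "pa \<gamma> \<le> c" "c \<le> d" "d \<le> pb \<gamma>"
  shows "nu_path \<mu> \<gamma> d - nu_path \<mu> \<gamma> c = measure (path_measure \<mu> \<gamma>) {c..d}"
proof -
  interpret finite_measure "path_measure \<mu> \<gamma>" by (rule finite_measure_path_measure)
  have nu: "nu_path \<mu> \<gamma> t = measure (path_measure \<mu> \<gamma>) {pa \<gamma>..t}" if "t \<le> pb \<gamma>" for t
    using emeasure_path_measure[of "{pa \<gamma>..t}"] that
    by (simp add: nu_path_def measure_def Int_absorb2)
  let ?M = "measure (path_measure \<mu> \<gamma>)"
  have "?M {pa \<gamma>..d} = ?M ({pa \<gamma>..c} \<union> {c<..d})"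
    using assms by (intro arg_cong[where f = ?M]) auto
  also have "\<dots> = ?M {pa \<gamma>..c} + ?M {c<..d}"
    by (rule finite_measure_Union) auto
  finally have left: "?M {pa \<gamma>..d} = ?M {pa \<gamma>..c} + ?M {c<..d}" .
  have "?M {c..d} = ?M ({c} \<union> {c<..d})"
    using assms by (intro arg_cong[where f = ?M]) auto
  also have "\<dots> = ?M {c} + ?M {c<..d}"
    by (rule finite_measure_Union) auto
  finally have right: "?M {c..d} = ?M {c} + ?M {c<..d}" .
  have "?M {c} = 0"
    using emeasure_path_measure_singleton[of c] by (simp add: measure_def)
  then show ?thesis using left right nu assms by simp
qed

lemma strict_mono_on_nu_path: "strict_mono_on {pa \<gamma>..pb \<gamma>} (nu_path \<mu> \<gamma>)"
proof (rule strict_mono_onI)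
  fix r s assume "r \<in> {pa \<gamma>..pb \<gamma>}" "s \<in> {pa \<gamma>..pb \<gamma>}" "r < s"
  then have "0 < emeasure (path_measure \<mu> \<gamma>) {r..s}"
    using Gamma_muD(5)[OF \<gamma>, of r s] emeasure_path_measure[of "{r..s}"]
    by (simp add: Int_absorb2)
  then have "0 < measure (path_measure \<mu> \<gamma>) {r..s}"
    using finite_measure.emeasure_eq_measure[OF finite_measure_path_measure] by simp
  then show "nu_path \<mu> \<gamma> r < nu_path \<mu> \<gamma> s"
    using nu_path_diff[of r s] \<open>r \<in> _\<close> \<open>s \<in> _\<close> \<open>r < s\<close> by simp
qed

lemma continuous_on_nu_path: "continuous_on {pa \<gamma>..pb \<gamma>} (nu_path \<mu> \<gamma>)"
proof -
  interpret finite_borel_measure "path_measure \<mu> \<gamma>"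
    using finite_measure_path_measure by (simp add: finite_borel_measure_def finite_borel_measure_axioms_def)
  let ?M = "measure (path_measure \<mu> \<gamma>)"
  have cdf_eq: "cdf (path_measure \<mu> \<gamma>) t = nu_path \<mu> \<gamma> t" if "t \<in> {pa \<gamma>..pb \<gamma>}" for t
  proof -
    have "{..<pa \<gamma>} \<inter> {pa \<gamma>..pb \<gamma>} = {}" by auto
    then have "?M {..<pa \<gamma>} = 0"
      using emeasure_path_measure[of "{..<pa \<gamma>}"] by (simp add: measure_def)
    moreover have "?M {..t} = ?M ({..<pa \<gamma>} \<union> {pa \<gamma>..t})"
      using that by (intro arg_cong[where f = ?M]) auto
    moreover have "?M {pa \<gamma>..t} = nu_path \<mu> \<gamma> t"
      using nu_path_diff[of "pa \<gamma>" t] that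
        emeasure_path_measure[of "{pa \<gamma>}"] atomless[of "pf \<gamma> (pa \<gamma>)"]
      by (simp add: nu_path_def measure_def)
    moreover have "?M ({..<pa \<gamma>} \<union> {pa \<gamma>..t}) = ?M {..<pa \<gamma>} + ?M {pa \<gamma>..t}"
      by (rule finite_measure_Union) auto
    ultimately show ?thesis by (simp add: cdf_def)
  qed
  have "isCont (cdf (path_measure \<mu> \<gamma>)) t" for t
    using emeasure_path_measure_singleton[of t] by (simp add: isCont_cdf measure_def)
  then have "continuous_on {pa \<gamma>..pb \<gamma>} (cdf (path_measure \<mu> \<gamma>))"
    by (simp add: continuous_at_imp_continuous_on)
  then show ?thesis by (rule continuous_on_eq) (simp add: cdf_eq)
qed

lemma nu_path_in_range:
  assumes "t \<in> {pa \<gamma>..pb \<gamma>}"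
  shows "nu_path \<mu> \<gamma> t \<in> {0..hlen \<mu> \<gamma>}"
proof -
  have "nu_path \<mu> \<gamma> t \<le> nu_path \<mu> \<gamma> (pb \<gamma>)"
    using assms strict_mono_onD[OF strict_mono_on_nu_path, of t "pb \<gamma>"]
    by (cases "t = pb \<gamma>") auto
  then show ?thesis by (simp add: nu_path_def hlen_def pIm_def)
qed

lemma gamma_h_nu_path:
  assumes "t \<in> {pa \<gamma>..pb \<gamma>}"
  shows "gamma_h \<mu> \<gamma> (nu_path \<mu> \<gamma> t) = pf \<gamma> t"
  using inv_into_f_f[OF strict_mono_on_imp_inj_on[OF strict_mono_on_nu_path] assms]
  by (simp add: gamma_h_def)

lemma continuous_on_comp_path:
  assumes "abs_cont_on 0 (hlen \<mu> \<gamma>) (f \<circ> gamma_h \<mu> \<gamma>)"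
  shows "continuous_on {pa \<gamma>..pb \<gamma>} (f \<circ> pf \<gamma>)"
proof -
  have "continuous_on {pa \<gamma>..pb \<gamma>} (\<lambda>t. (f \<circ> gamma_h \<mu> \<gamma>) (nu_path \<mu> \<gamma> t))"
    by (rule continuous_on_compose2[OF abs_cont_on_imp_continuous_on[OF assms] continuous_on_nu_path])
      (use nu_path_in_range in auto)
  then show ?thesis by (rule continuous_on_eq) (simp add: gamma_h_nu_path)
qed

lemma small_variation_on_path:
  assumes "abs_cont_on 0 (hlen \<mu> \<gamma>) (f \<circ> gamma_h \<mu> \<gamma>)" and "0 < e"
  shows "\<exists>\<delta>>0. \<forall>V\<in>sets (path_measure \<mu> \<gamma>). emeasure (path_measure \<mu> \<gamma>) V < ennreal \<delta> \<longrightarrow>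
           small_variation_on ({pa \<gamma>..pb \<gamma>} \<inter> V) (f \<circ> pf \<gamma>) e"
proof (rule small_variation_on_reparametrization[OF sets_path_measure emeasure_path_measure_singleton
      finite_measure_path_measure nu_path_diff nu_path_in_range _ assms])
  show "(f \<circ> pf \<gamma>) t = (f \<circ> gamma_h \<mu> \<gamma>) (nu_path \<mu> \<gamma> t)" if "t \<in> {pa \<gamma>..pb \<gamma>}" for t
    using gamma_h_nu_path[OF that] by simp
qed

end

end

lemma upper_gradient_ineq_vanishing_off_closed:
  fixes \<mu> :: "'a::t2_space measure" and f :: "'a \<Rightarrow> real" and \<rho> :: "'a \<Rightarrow> ennreal"
  assumes sets_\<mu>: "sets \<mu> = sets borel" and atomless: "\<And>x. emeasure \<mu> {x} = 0"
    and \<gamma>: "\<gamma> \<in> Gamma_mu \<mu>" and \<rho>: "\<rho> \<in> borel_measurable borel"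
    and "closed F" and N: "N \<in> sets borel" "emeasure \<mu> (pIm \<gamma> \<inter> N) = 0"
    and f_zero: "\<And>x. x \<in> F - N \<Longrightarrow> f x = 0"
    and off_F: "\<And>c d. pa \<gamma> \<le> c \<Longrightarrow> c < d \<Longrightarrow> d \<le> pb \<gamma> \<Longrightarrow> pf \<gamma> ` {c..d} \<inter> F = {} \<Longrightarrow>
        ennreal \<bar>f (pf \<gamma> d) - f (pf \<gamma> c)\<bar> \<le> (\<integral>\<^sup>+x\<in>pf \<gamma> ` {c..d}. \<rho> x \<partial>\<mu>)"
    and AC: "abs_cont_on 0 (hlen \<mu> \<gamma>) (f \<circ> gamma_h \<mu> \<gamma>)"
  shows "upper_gradient_ineq \<mu> f \<rho> \<gamma>"
proof -
  define a b g M where "a = pa \<gamma>" and "b = pb \<gamma>" and "g = pf \<gamma>" and "M = path_measure \<mu> \<gamma>"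
  obtain h where h: "continuous_on UNIV h" "\<And>t. t \<in> {a..b} \<Longrightarrow> h t = g t"
    using cpath_continuous_extension[OF Gamma_muD(1)[OF \<gamma>]] unfolding a_def b_def g_def by blast
  have h_borel: "h \<in> borel_measurable borel" by (rule borel_measurable_continuous_onI[OF h(1)])
  define w where "w t = \<rho> (h t)" for t
  have w: "w \<in> borel_measurable borel" unfolding w_def using \<rho> h_borel by measurable
  have integral_w: "(\<integral>\<^sup>+x\<in>g ` {c..d}. \<rho> x \<partial>\<mu>) = (\<integral>\<^sup>+t\<in>{c..d}. w t \<partial>M)"
    if "a \<le> c" "d \<le> b" for c d
    using nn_integral_path_measure[OF sets_\<mu> \<gamma> \<rho>, of c d] that h(2)
    by (auto simp: a_def b_def g_def M_def w_def indicator_def intro!: nn_integral_cong)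
  \<comment> \<open>off \<open>U \<union> B\<close> the path runs in \<open>F - N\<close>, where \<open>f\<close> vanishes\<close>
  define U where "U = h -` (- F)"
  have "open U" unfolding U_def
    using \<open>closed F\<close> h(1) by (auto intro: continuous_open_vimage simp: continuous_on_eq_continuous_at)
  define B where "B = {a..b} \<inter> h -` N"
  have B: "B \<in> sets borel" unfolding B_def using h_borel N(1) by measurable
  have "g ` (B \<inter> {a..b}) = pIm \<gamma> \<inter> N"
    using h(2) by (auto simp: B_def pIm_def a_def b_def g_def)
  then have "emeasure M B = 0"
    using emeasure_path_measure[OF sets_\<mu> \<gamma> B] N(2) by (simp add: M_def a_def b_def g_def)
  have "ennreal \<bar>(f \<circ> g) b - (f \<circ> g) a\<bar> \<le> (\<integral>\<^sup>+t\<in>{a..b}. w t \<partial>M)"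
  proof (rule abs_diff_le_zero_off_open_null[OF _ _ _ w \<open>open U\<close> B \<open>emeasure M B = 0\<close>])
    show "(f \<circ> g) t = 0" if "t \<in> {a..b} - (U \<union> B)" for t
      using that h(2)[of t] f_zero by (auto simp: U_def B_def)
    show "ennreal \<bar>(f \<circ> g) d - (f \<circ> g) c\<bar> \<le> (\<integral>\<^sup>+t\<in>{c..d}. w t \<partial>M)"
      if "c < d" "{c..d} \<subseteq> {a..b} \<inter> U" for c d
    proof -
      have "g ` {c..d} \<inter> F = {}" using that h(2) by (auto simp: U_def)
      then show ?thesis
        using off_F[of c d] that integral_w[of c d] by (auto simp: a_def b_def g_def)
    qed
  qed (use Gamma_muD(2)[OF \<gamma>] emeasure_path_measure_singleton[OF sets_\<mu> \<gamma> atomless]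
        finite_measure_path_measure[OF sets_\<mu> \<gamma>] continuous_on_comp_path[OF sets_\<mu> \<gamma> atomless AC]
        small_variation_on_path[OF sets_\<mu> \<gamma> atomless AC]
      in \<open>simp_all add: a_def b_def g_def M_def comp_def\<close>)
  then show ?thesis
    using integral_w[of a b]
    by (simp add: upper_gradient_ineq_def line_int_def pIm_def a_def b_def g_def abs_minus_commute)
qed

section \<open>Exceptional families of paths\<close>

lemma upper_gradient_subpath_avoiding:
  assumes "upper_gradient \<mu> \<Gamma>s f \<rho>" and "\<delta> \<in> \<Gamma>s" and "is_restriction \<gamma> c d \<delta>" and "c \<le> d"
    and "pf \<gamma> ` {c..d} \<inter> F = {}"
  shows "ennreal \<bar>f (pf \<gamma> d) - f (pf \<gamma> c)\<bar> \<le> (\<integral>\<^sup>+x\<in>pf \<gamma> ` {c..d}. (if x \<in> F then 0 else \<rho> x) \<partial>\<mu>)"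
proof -
  have \<delta>: "pa \<delta> = c" "pb \<delta> = d" "\<And>t. t \<in> {c..d} \<Longrightarrow> pf \<delta> t = pf \<gamma> t"
    using assms(3) by (auto simp: is_restriction_def)
  then have "pIm \<delta> = pf \<gamma> ` {c..d}" by (auto simp: pIm_def)
  with \<delta> assms(1,2,4) have "ennreal \<bar>f (pf \<gamma> d) - f (pf \<gamma> c)\<bar> \<le> (\<integral>\<^sup>+x\<in>pf \<gamma> ` {c..d}. \<rho> x \<partial>\<mu>)"
    by (auto simp: upper_gradient_def upper_gradient_ineq_def line_int_def abs_minus_commute)
  also have "\<dots> = (\<integral>\<^sup>+x\<in>pf \<gamma> ` {c..d}. (if x \<in> F then 0 else \<rho> x) \<partial>\<mu>)"
    using assms(5) by (intro nn_integral_cong) (auto simp: indicator_def)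
  finally show ?thesis .
qed

lemma Modp_Un_paths_meeting_null_set:
  assumes N: "N \<in> sets borel" "N \<in> null_sets m"
    and meas: "\<And>\<gamma>. \<gamma> \<in> \<Gamma>' \<Longrightarrow> pIm \<gamma> \<inter> N \<in> sets \<mu>"
  shows "Modp p m \<mu> (\<Gamma> \<union> {\<gamma>\<in>\<Gamma>'. emeasure \<mu> (pIm \<gamma> \<inter> N) \<noteq> 0}) \<le> Modp p m \<mu> \<Gamma>"
  unfolding Modp_def
proof (rule INF_mono)
  fix g assume g: "g \<in> {g. g \<in> borel_measurable borel \<and> (\<forall>\<gamma>\<in>\<Gamma>. 1 \<le> line_int \<mu> \<gamma> g)}"
  \<comment> \<open>raising \<open>g\<close> to \<open>\<infinity>\<close> on the \<open>m\<close>-null set \<open>N\<close> costs nothing\<close>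
  define g' where "g' x = (if x \<in> N then \<infinity> else g x)" for x
  have "g' \<in> borel_measurable borel"
    unfolding g'_def using g N(1) by (intro measurable_If_set) auto
  moreover have "1 \<le> line_int \<mu> \<gamma> g'" if "\<gamma> \<in> \<Gamma>" for \<gamma>
  proof -
    have "line_int \<mu> \<gamma> g \<le> line_int \<mu> \<gamma> g'"
      unfolding line_int_def g'_def by (intro nn_integral_mono) (auto simp: indicator_def)
    then show ?thesis using g that by (auto intro: order_trans)
  qed
  moreover have "1 \<le> line_int \<mu> \<gamma> g'" if "\<gamma> \<in> \<Gamma>'" "emeasure \<mu> (pIm \<gamma> \<inter> N) \<noteq> 0" for \<gamma>
  proof -
    have "\<infinity> = (\<integral>\<^sup>+x. \<infinity> * indicator (pIm \<gamma> \<inter> N) x \<partial>\<mu>)"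
      using that meas by (simp add: nn_integral_cmult_indicator ennreal_mult_eq_top_iff)
    also have "\<dots> \<le> line_int \<mu> \<gamma> g'"
      unfolding line_int_def g'_def by (intro nn_integral_mono) (auto simp: indicator_def)
    finally show ?thesis by (simp add: top_unique)
  qed
  moreover have "(\<integral>\<^sup>+x. epowr (g' x) p \<partial>m) = (\<integral>\<^sup>+x. epowr (g x) p \<partial>m)"
    using AE_not_in[OF N(2)] by (intro nn_integral_cong_AE) (auto simp: g'_def)
  ultimately show "\<exists>g'\<in>{g. g \<in> borel_measurable borel \<and>
      (\<forall>\<gamma>\<in>\<Gamma> \<union> {\<gamma>\<in>\<Gamma>'. emeasure \<mu> (pIm \<gamma> \<inter> N) \<noteq> 0}. 1 \<le> line_int \<mu> \<gamma> g)}.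
        (\<integral>\<^sup>+x. epowr (g' x) p \<partial>m) \<le> (\<integral>\<^sup>+x. epowr (g x) p \<partial>m)"
    by (intro bexI[of _ g']) auto
qed

lemma p_ae_paths_trace_null:
  assumes "p_ae_paths p m \<mu> \<Gamma>s P" and "N \<in> sets borel" "N \<in> null_sets m"
    and "\<And>\<gamma>. \<gamma> \<in> \<Gamma>s \<Longrightarrow> pIm \<gamma> \<inter> N \<in> sets \<mu>"
  shows "p_ae_paths p m \<mu> \<Gamma>s (\<lambda>\<gamma>. P \<gamma> \<and> emeasure \<mu> (pIm \<gamma> \<inter> N) = 0)"
proof -
  obtain \<Gamma>0 where "\<Gamma>0 \<subseteq> \<Gamma>s" "Modp p m \<mu> \<Gamma>0 = 0" "\<forall>\<gamma>\<in>\<Gamma>s - \<Gamma>0. P \<gamma>"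
    using assms(1) by (auto simp: p_ae_paths_def)
  moreover have "Modp p m \<mu> (\<Gamma>0 \<union> {\<gamma>\<in>\<Gamma>s. emeasure \<mu> (pIm \<gamma> \<inter> N) \<noteq> 0}) = 0"
    using Modp_Un_paths_meeting_null_set[where \<Gamma>' = \<Gamma>s and \<Gamma> = \<Gamma>0 and p = p, OF assms(2-4)]
      \<open>Modp p m \<mu> \<Gamma>0 = 0\<close> by simp
  ultimately show ?thesis
    unfolding p_ae_paths_def by (intro exI[of _ "\<Gamma>0 \<union> {\<gamma>\<in>\<Gamma>s. emeasure \<mu> (pIm \<gamma> \<inter> N) \<noteq> 0}"]) auto
qed

lemma p_ae_paths_mono:
  "p_ae_paths p m \<mu> \<Gamma>s P \<Longrightarrow> (\<And>\<gamma>. \<gamma> \<in> \<Gamma>s \<Longrightarrow> P \<gamma> \<Longrightarrow> Q \<gamma>) \<Longrightarrow> p_ae_paths p m \<mu> \<Gamma>s Q"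
  unfolding p_ae_paths_def by blast

theorem lemma5p1:
  fixes \<mu> m :: "'a::metric_space measure"
    and p :: real
    and \<Gamma>s :: "'a cpath set"
    and F :: "'a set"
    and f :: "'a \<Rightarrow> real"
    and \<rho> :: "'a \<Rightarrow> ennreal"
  assumes mu_borel: "sets \<mu> = sets borel"
    and mu_nonatomic: "\<And>x. emeasure \<mu> {x} = 0"
    and m_borel: "sets m = sets borel"
    and p_pos: "0 < p"
    and Gs_sub: "\<Gamma>s \<subseteq> Gamma_mu \<mu>"
    and Gs_subpaths: "\<And>\<gamma> c d. \<gamma> \<in> \<Gamma>s \<Longrightarrow> pa \<gamma> \<le> c \<Longrightarrow> c < d \<Longrightarrow> d \<le> pb \<gamma> \<Longrightarrow>
                         \<exists>\<delta>\<in>\<Gamma>s. is_restriction \<gamma> c d \<delta>"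
    and Gs_connects: "\<And>x y. x \<noteq> y \<Longrightarrow> \<exists>\<gamma>\<in>\<Gamma>s. pf \<gamma> (pa \<gamma>) = x \<and> pf \<gamma> (pb \<gamma>) = y"
    and F_closed: "closed F"
    and f_ACC: "ACC_p p m \<mu> \<Gamma>s f"
    and f_zero: "AE x in m. x \<in> F \<longrightarrow> f x = 0"
    and rho_ug: "upper_gradient \<mu> \<Gamma>s f \<rho>"
  shows "weak_upper_gradient p m \<mu> \<Gamma>s f (\<lambda>x. if x \<in> F then 0 else \<rho> x)"
proof -
  let ?\<rho>' = "\<lambda>x. if x \<in> F then 0 else \<rho> x"
  have \<rho>'_borel: "?\<rho>' \<in> borel_measurable borel"
    using rho_ug F_closed by (auto simp: upper_gradient_def intro!: measurable_If_set)
  obtain N where "{x \<in> space m. \<not> (x \<in> F \<longrightarrow> f x = 0)} \<subseteq> N" "emeasure m N = 0" "N \<in> sets m"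
    using f_zero by (rule AE_E)
  then have N: "N \<in> sets borel" "N \<in> null_sets m" "\<And>x. x \<in> F - N \<Longrightarrow> f x = 0"
    using sets_eq_imp_space_eq[OF m_borel] m_borel by auto
  have "p_ae_paths p m \<mu> \<Gamma>s
      (\<lambda>\<gamma>. abs_cont_on 0 (hlen \<mu> \<gamma>) (f \<circ> gamma_h \<mu> \<gamma>) \<and> emeasure \<mu> (pIm \<gamma> \<inter> N) = 0)"
    using f_ACC N(1,2) pIm_in_sets[OF mu_borel] Gs_sub mu_borel
    by (intro p_ae_paths_trace_null) (auto simp: ACC_p_def)
  then have "p_ae_paths p m \<mu> \<Gamma>s (upper_gradient_ineq \<mu> f ?\<rho>')"
  proof (rule p_ae_paths_mono, elim conjE)
    fix \<gamma> assume \<gamma>: "\<gamma> \<in> \<Gamma>s" and AC: "abs_cont_on 0 (hlen \<mu> \<gamma>) (f \<circ> gamma_h \<mu> \<gamma>)"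
      and null: "emeasure \<mu> (pIm \<gamma> \<inter> N) = 0"
    show "upper_gradient_ineq \<mu> f ?\<rho>' \<gamma>"
    proof (rule upper_gradient_ineq_vanishing_off_closed[OF mu_borel mu_nonatomic
          subsetD[OF Gs_sub \<gamma>] \<rho>'_borel F_closed N(1) null N(3) _ AC])
      fix c d assume cd: "pa \<gamma> \<le> c" "c < d" "d \<le> pb \<gamma>" "pf \<gamma> ` {c..d} \<inter> F = {}"
      then obtain \<delta> where "\<delta> \<in> \<Gamma>s" "is_restriction \<gamma> c d \<delta>" using Gs_subpaths[OF \<gamma>] by blast
      then show "ennreal \<bar>f (pf \<gamma> d) - f (pf \<gamma> c)\<bar> \<le> (\<integral>\<^sup>+x\<in>pf \<gamma> ` {c..d}. ?\<rho>' x \<partial>\<mu>)"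
        using upper_gradient_subpath_avoiding[OF rho_ug] cd by simp
    qed
  qed
  with \<rho>'_borel show ?thesis by (simp add: weak_upper_gradient_def)
qed

end
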